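(* Consider any execution of the reliable broadcast algorithm described in the context, with $n$ processes of which at most $f$ are Byzantine. At every point of the execution the following hold, where $\langle x\rangle_p$ denotes $x$ signed by $p$: (I1) If $\langle\langle ts,v\rangle_i,\sigma\rangle$, with $\sigma$ a set of $f+1$ signatures (of distinct processes) on $\langle ready,\langle ts,v\rangle_i\rangle$, appears in $deliver_j$ for some processes $i,j$, then $\langle ready,\langle ts,v\rangle_i\rangle_k\in ready_k$ for some correct process $k$. (I2) If $\langle ready,\langle ts,v\rangle_i\rangle_j\in ready_j$ for a correct process $j$, then $\langle ts,v\rangle_i\in echo_j$. (I3) If $\langle ready,\langle ts,v\rangle_i\rangle_j\in ready_j$ and $\langle ready,\langle ts,w\rangle_i\rangle_{j'}\in ready_{j'}$ for correct processes $j,j'$, then $v=w$. (I4) If $\langle\langle ts,v\rangle_i,\sigma\rangle\in deliver_j$ and $\langle\langle ts,w\rangle_i,\sigma'\rangle\in deliver_{j'}$ (with $\sigma,\sigma'$ sets of $f+1$ ready signatures as in (I1)) for correct processes $j,j'$, then $v=w$.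
   Context: Model: processes $\Pi=\{1,\dots,n\}$, asynchronous, communicating through reliable single-writer multi-reader (SWMR) registers. Up to $f$ processes are Byzantine (arbitrary behavior, may write arbitrary values to their own registers); correct processes follow the algorithm. PKI: $\langle x\rangle_p$ denotes $x$ signed by $p$, and signatures are unforgeable. Algorithm (code for process $i$): $i$ owns SWMR registers $send_i$, $echo_i$, $ready_i$, $deliver_i$ (the last three hold sets, initially empty; a correct process only adds elements to them). conflicting-echo$(\langle ts,v\rangle_j)$: reads all echo registers and returns true iff there exist $w\neq v$ and $k\in\Pi$ with $\langle ts,w\rangle_j\in echo_k$. broadcast$(ts,val)$: write $send_i\gets\langle ts,val\rangle_i$; then repeatedly call deliver$(i,ts)$ until it returns a value $\neq\bot$, and return. deliver$(j,ts)$: call refresh(); if there exist $k\in\Pi$ and $v$ such that $\langle\langle ts,v\rangle_j,\sigma\rangle\in deliver_k$ where $\sigma$ is a set of $f+1$ signatures of distinct processes on $\langle ready,\langle ts,v\rangle_j\rangle$, then add $\langle\langle ts,v\rangle_j,\sigma\rangle$ to $deliver_i$ and return $v$; otherwise return $\bot$. refresh(): for each $j\in[n]$: read $m\gets send_j$; if $m$ is not of the form $\langle ts,val\rangle_j$, skip to the next $j$; add $m$ (signed by $i$) to $echo_i$; if not conflicting-echo$(m)$, add $\langle ready,m\rangle_i$ to $ready_i$; if there is a set $S\subseteq\Pi$ with $|S|\geq f+1$ such that $\langle ready,m\rangle_l\in ready_l$ for all $l\in S$, and not conflicting-echo$(m)$ (re-reading all echo registers), then add $\langle m,\{\langle ready,m\rangle_l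 : l\in S\}\rangle$ to $deliver_i$. *)

theory Defs
  imports Main "HOL-Library.FSet"
begin

(* Processes are natural numbers; the process set is Pi = {1..n}. *)

(* MData ts v            : the pair <ts,v>
   MReady m              : the pair <ready, m>
   MSig p m              : <m>_p, the message m signed by process p
   MDeliv m sigma        : the pair <m, sigma> (sigma a finite set of messages) *)
datatype ('t,'v) msg =
    MData 't 'v
  | MReady "('t,'v) msg"
  | MSig nat "('t,'v) msg"
  | MDeliv "('t,'v) msg" "('t,'v) msg fset"

inductive_set parts :: "('t,'v) msg set \<Rightarrow> ('t,'v) msg set" for H where
  inj: "x \<in> H \<Longrightarrow> x \<in> parts H"
| rdy: "MReady x \<in> parts H \<Longrightarrow> x \<in> parts H"
| sig: "MSig p x \<in> parts H \<Longrightarrow> x \<in> parts H"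
| dl1: "MDeliv x \<sigma> \<in> parts H \<Longrightarrow> x \<in> parts H"
| dl2: "MDeliv x \<sigma> \<in> parts H \<Longrightarrow> y |\<in>| \<sigma> \<Longrightarrow> y \<in> parts H"

definition is_cert :: "nat \<Rightarrow> nat \<Rightarrow> ('t,'v) msg \<Rightarrow> ('t,'v) msg fset \<Rightarrow> bool" where
  "is_cert n f m \<sigma> \<longleftrightarrow>
     (\<exists>S. fset S \<subseteq> {1..n} \<and> f + 1 \<le> fcard S \<and> \<sigma> = (\<lambda>l. MSig l (MReady m)) |`| S)"

definition valid_entry :: "nat \<Rightarrow> nat \<Rightarrow> nat \<Rightarrow> 't \<Rightarrow> ('t,'v) msg \<Rightarrow> bool" where
  "valid_entry n f j ts e \<longleftrightarrow>
     (\<exists>v \<sigma>. e = MDeliv (MSig j (MData ts v)) \<sigma> \<and> is_cert n f (MSig j (MData ts v)) \<sigma>)"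

(* the test performed on the echo register of process k (read by conflicting-echo
   for the message <ts,v>_j): there is w \<noteq> v with <<ts,w>_j>_k in echo_k *)
definition conflict_in :: "('t,'v) msg set \<Rightarrow> nat \<Rightarrow> nat \<Rightarrow> 't \<Rightarrow> 'v \<Rightarrow> bool" where
  "conflict_in E k j ts v \<longleftrightarrow> (\<exists>w. w \<noteq> v \<and> MSig k (MSig j (MData ts w)) \<in> E)"

(* Every step of a correct process performs at most one register access.
   Loop indices range over 1..n; an index > n means the loop is finished. *)
datatype ('t,'v) pcv =
    Idle
  | BcWrite 't 'v                               \<comment> \<open>broadcast: next write send_i\<close>
  | RRdSend nat                                 \<comment> \<open>refresh: next read send_j\<close>
  | RWrEcho nat 't 'v                           \<comment> \<open>refresh: add <m>_i to echo_i\<close>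
  | RChk1 nat 't 'v nat bool                    \<comment> \<open>1st conflicting-echo: next read echo_k, result so far\<close>
  | RWrReady nat 't 'v                          \<comment> \<open>add <ready,m>_i to ready_i\<close>
  | RRdReady nat 't 'v nat "nat fset"           \<comment> \<open>next read ready_l, set S so far\<close>
  | RChk2 nat 't 'v "nat fset" nat bool         \<comment> \<open>2nd conflicting-echo (re-reading)\<close>
  | RWrDeliv nat 't 'v "nat fset"               \<comment> \<open>add <m, sigma> to deliver_i\<close>
  | DRd nat                                     \<comment> \<open>deliver: next read deliver_k\<close>
  | DWr "('t,'v) msg"                           \<comment> \<open>deliver: add found entry to deliver_i\<close>

(* lj, lts: arguments (j,ts) of the current deliver invocation;
   lbc: whether that invocation was issued by broadcast (which loops) *)
record ('t,'v) lstate =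
  lpc :: "('t,'v) pcv"
  lj :: nat
  lts :: 't
  lbc :: bool

(* registers, local states, and a ghost component histS collecting every
   message ever written to any register (used to express unforgeability) *)
record ('t,'v) gstate =
  sendR  :: "nat \<Rightarrow> ('t,'v) msg option"
  echoR  :: "nat \<Rightarrow> ('t,'v) msg set"
  readyR :: "nat \<Rightarrow> ('t,'v) msg set"
  delivR :: "nat \<Rightarrow> ('t,'v) msg set"
  locS   :: "nat \<Rightarrow> ('t,'v) lstate"
  histS  :: "('t,'v) msg set"

definition setloc :: "nat \<Rightarrow> ('t,'v) lstate \<Rightarrow> ('t,'v) gstate \<Rightarrow> ('t,'v) gstate" where
  "setloc i l s = s\<lparr>locS := (locS s)(i := l)\<rparr>"

definition init_state :: "('t,'v) gstate \<Rightarrow> bool" where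
  "init_state s \<longleftrightarrow> sendR s = (\<lambda>_. None) \<and> echoR s = (\<lambda>_. {}) \<and> readyR s = (\<lambda>_. {})
     \<and> delivR s = (\<lambda>_. {}) \<and> (\<forall>i. lpc (locS s i) = Idle) \<and> histS s = {}"

inductive cstep :: "nat \<Rightarrow> nat \<Rightarrow> nat \<Rightarrow> ('t,'v) gstate \<Rightarrow> ('t,'v) gstate \<Rightarrow> bool"
  for n f :: nat where
  start_bcast:
    "lpc (locS s i) = Idle \<Longrightarrow>
     cstep n f i s (setloc i ((locS s i)\<lparr>lpc := BcWrite ts v\<rparr>) s)"
| start_deliver:
    "lpc (locS s i) = Idle \<Longrightarrow>
     cstep n f i s (setloc i ((locS s i)\<lparr>lpc := RRdSend 1, lj := j, lts := ts, lbc := False\<rparr>) s)"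
| bc_write:
    "lpc (locS s i) = BcWrite ts v \<Longrightarrow>
     cstep n f i s (setloc i ((locS s i)\<lparr>lpc := RRdSend 1, lj := i, lts := ts, lbc := True\<rparr>)
       (s\<lparr>sendR := (sendR s)(i := Some (MSig i (MData ts v))),
          histS := insert (MSig i (MData ts v)) (histS s)\<rparr>))"
| rd_send_ok:
    "lpc (locS s i) = RRdSend j \<Longrightarrow> j \<le> n \<Longrightarrow> sendR s j = Some (MSig j (MData ts v)) \<Longrightarrow>
     cstep n f i s (setloc i ((locS s i)\<lparr>lpc := RWrEcho j ts v\<rparr>) s)"
| rd_send_skip:
    "lpc (locS s i) = RRdSend j \<Longrightarrow> j \<le> n \<Longrightarrow>
     \<not> (\<exists>ts v. sendR s j = Some (MSig j (MData ts v))) \<Longrightarrow>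
     cstep n f i s (setloc i ((locS s i)\<lparr>lpc := RRdSend (Suc j)\<rparr>) s)"
| rd_send_end:
    "lpc (locS s i) = RRdSend j \<Longrightarrow> n < j \<Longrightarrow>
     cstep n f i s (setloc i ((locS s i)\<lparr>lpc := DRd 1\<rparr>) s)"
| wr_echo:
    "lpc (locS s i) = RWrEcho j ts v \<Longrightarrow>
     cstep n f i s (setloc i ((locS s i)\<lparr>lpc := RChk1 j ts v 1 False\<rparr>)
       (s\<lparr>echoR := (echoR s)(i := insert (MSig i (MSig j (MData ts v))) (echoR s i)),
          histS := insert (MSig i (MSig j (MData ts v))) (histS s)\<rparr>))"
| chk1_rd:
    "lpc (locS s i) = RChk1 j ts v k c \<Longrightarrow> k \<le> n \<Longrightarrow>
     cstep n f i s (setloc i ((locS s i)\<lparr>lpc :=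
        RChk1 j ts v (Suc k) (c \<or> conflict_in (echoR s k) k j ts v)\<rparr>) s)"
| chk1_end_ok:
    "lpc (locS s i) = RChk1 j ts v k False \<Longrightarrow> n < k \<Longrightarrow>
     cstep n f i s (setloc i ((locS s i)\<lparr>lpc := RWrReady j ts v\<rparr>) s)"
| chk1_end_conf:
    "lpc (locS s i) = RChk1 j ts v k True \<Longrightarrow> n < k \<Longrightarrow>
     cstep n f i s (setloc i ((locS s i)\<lparr>lpc := RRdReady j ts v 1 {||}\<rparr>) s)"
| wr_ready:
    "lpc (locS s i) = RWrReady j ts v \<Longrightarrow>
     cstep n f i s (setloc i ((locS s i)\<lparr>lpc := RRdReady j ts v 1 {||}\<rparr>)
       (s\<lparr>readyR := (readyR s)(i := insert (MSig i (MReady (MSig j (MData ts v)))) (readyR s i)),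
          histS := insert (MSig i (MReady (MSig j (MData ts v)))) (histS s)\<rparr>))"
| rdready_rd:
    "lpc (locS s i) = RRdReady j ts v l S \<Longrightarrow> l \<le> n \<Longrightarrow>
     cstep n f i s (setloc i ((locS s i)\<lparr>lpc := RRdReady j ts v (Suc l)
        (if MSig l (MReady (MSig j (MData ts v))) \<in> readyR s l then finsert l S else S)\<rparr>) s)"
| rdready_end_ok:
    "lpc (locS s i) = RRdReady j ts v l S \<Longrightarrow> n < l \<Longrightarrow> f + 1 \<le> fcard S \<Longrightarrow>
     cstep n f i s (setloc i ((locS s i)\<lparr>lpc := RChk2 j ts v S 1 False\<rparr>) s)"
| rdready_end_no:
    "lpc (locS s i) = RRdReady j ts v l S \<Longrightarrow> n < l \<Longrightarrow> fcard S < f + 1 \<Longrightarrow>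
     cstep n f i s (setloc i ((locS s i)\<lparr>lpc := RRdSend (Suc j)\<rparr>) s)"
| chk2_rd:
    "lpc (locS s i) = RChk2 j ts v S k c \<Longrightarrow> k \<le> n \<Longrightarrow>
     cstep n f i s (setloc i ((locS s i)\<lparr>lpc :=
        RChk2 j ts v S (Suc k) (c \<or> conflict_in (echoR s k) k j ts v)\<rparr>) s)"
| chk2_end_ok:
    "lpc (locS s i) = RChk2 j ts v S k False \<Longrightarrow> n < k \<Longrightarrow>
     cstep n f i s (setloc i ((locS s i)\<lparr>lpc := RWrDeliv j ts v S\<rparr>) s)"
| chk2_end_conf:
    "lpc (locS s i) = RChk2 j ts v S k True \<Longrightarrow> n < k \<Longrightarrow>
     cstep n f i s (setloc i ((locS s i)\<lparr>lpc := RRdSend (Suc j)\<rparr>) s)"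
| wr_deliv:
    "lpc (locS s i) = RWrDeliv j ts v S \<Longrightarrow>
     e = MDeliv (MSig j (MData ts v)) ((\<lambda>l. MSig l (MReady (MSig j (MData ts v)))) |`| S) \<Longrightarrow>
     cstep n f i s (setloc i ((locS s i)\<lparr>lpc := RRdSend (Suc j)\<rparr>)
       (s\<lparr>delivR := (delivR s)(i := insert e (delivR s i)),
          histS := insert e (histS s)\<rparr>))"
| drd_found:
    "lpc (locS s i) = DRd k \<Longrightarrow> k \<le> n \<Longrightarrow> e \<in> delivR s k \<Longrightarrow>
     valid_entry n f (lj (locS s i)) (lts (locS s i)) e \<Longrightarrow>
     cstep n f i s (setloc i ((locS s i)\<lparr>lpc := DWr e\<rparr>) s)"
| drd_skip:
    "lpc (locS s i) = DRd k \<Longrightarrow> k \<le> n \<Longrightarrow>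
     \<not> (\<exists>e \<in> delivR s k. valid_entry n f (lj (locS s i)) (lts (locS s i)) e) \<Longrightarrow>
     cstep n f i s (setloc i ((locS s i)\<lparr>lpc := DRd (Suc k)\<rparr>) s)"
| drd_end_bc:   \<comment> \<open>deliver returned bottom inside broadcast: call deliver(i,ts) again\<close>
    "lpc (locS s i) = DRd k \<Longrightarrow> n < k \<Longrightarrow> lbc (locS s i) \<Longrightarrow>
     cstep n f i s (setloc i ((locS s i)\<lparr>lpc := RRdSend 1\<rparr>) s)"
| drd_end_top:  \<comment> \<open>deliver returned bottom to the application\<close>
    "lpc (locS s i) = DRd k \<Longrightarrow> n < k \<Longrightarrow> \<not> lbc (locS s i) \<Longrightarrow>
     cstep n f i s (setloc i ((locS s i)\<lparr>lpc := Idle\<rparr>) s)"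
| dwr:          \<comment> \<open>deliver returns a value (and broadcast, if any, returns)\<close>
    "lpc (locS s i) = DWr e \<Longrightarrow>
     cstep n f i s (setloc i ((locS s i)\<lparr>lpc := Idle\<rparr>)
       (s\<lparr>delivR := (delivR s)(i := insert e (delivR s i)),
          histS := insert e (histS s)\<rparr>))"

(* Unforgeability: every signature of a non-Byzantine process occurring in a
   value written by a Byzantine process already occurs in some message that was
   previously written to some register. *)
definition forge_free :: "nat set \<Rightarrow> ('t,'v) gstate \<Rightarrow> ('t,'v) msg set \<Rightarrow> bool" where
  "forge_free B s X \<longleftrightarrow>
     (\<forall>p y. MSig p y \<in> parts X \<longrightarrow> p \<notin> B \<longrightarrow> MSig p y \<in> parts (histS s))"

inductive bstep :: "nat set \<Rightarrow> nat \<Rightarrow> ('t,'v) gstate \<Rightarrow> ('t,'v) gstate \<Rightarrow> bool"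
  for B :: "nat set" where
  b_send: "forge_free B s (set_option x) \<Longrightarrow>
     bstep B b s (s\<lparr>sendR := (sendR s)(b := x), histS := histS s \<union> set_option x\<rparr>)"
| b_echo: "forge_free B s X \<Longrightarrow>
     bstep B b s (s\<lparr>echoR := (echoR s)(b := X), histS := histS s \<union> X\<rparr>)"
| b_ready: "forge_free B s X \<Longrightarrow>
     bstep B b s (s\<lparr>readyR := (readyR s)(b := X), histS := histS s \<union> X\<rparr>)"
| b_deliv: "forge_free B s X \<Longrightarrow>
     bstep B b s (s\<lparr>delivR := (delivR s)(b := X), histS := histS s \<union> X\<rparr>)"

definition step :: "nat \<Rightarrow> nat \<Rightarrow> nat set \<Rightarrow> ('t,'v) gstate \<Rightarrow> ('t,'v) gstate \<Rightarrow> bool" where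
  "step n f B s s' \<longleftrightarrow>
     (\<exists>i \<in> {1..n} - B. cstep n f i s s') \<or> (\<exists>b \<in> B. bstep B b s s')"

inductive reach :: "nat \<Rightarrow> nat \<Rightarrow> nat set \<Rightarrow> ('t,'v) gstate \<Rightarrow> bool"
  for n f :: nat and B :: "nat set" where
  init: "init_state s \<Longrightarrow> reach n f B s"
| stp: "reach n f B s \<Longrightarrow> step n f B s s' \<Longrightarrow> reach n f B s'"

end

theory Submission
  imports Defs
begin

(* Everything follows from one inductive invariant of the interleaved execution.
   By unforgeability, a signature <ready,m>_k of a correct process k occurs in a written value
   only after k itself has written it to ready_k; as a certificate carries f+1 distinct
   signers, one of them is correct (I1). A correct process writes its echo before its first
   conflicting-echo scan and writes ready only if that scan finds no conflict (I2).
   For (I3), call p committed to v relative to q once its scan has read echo_q without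
   finding a conflict. If two correct processes p and q were committed to different values
   relative to each other, the one whose read of the other's echo register came later would
   have seen the other's echo, which is a conflict. (I4) follows from (I1) and (I3). *)

lemma parts_trans: "y \<in> parts G \<Longrightarrow> G \<subseteq> parts H \<Longrightarrow> y \<in> parts H"
  by (induction y rule: parts.induct) (auto intro: parts.intros)

lemma parts_mono: "G \<subseteq> H \<Longrightarrow> parts G \<subseteq> parts H"
  by (auto intro: parts_trans parts.inj)

lemma parts_Un: "parts (G \<union> H) = parts G \<union> parts H"
proof
  show "parts (G \<union> H) \<subseteq> parts G \<union> parts H"
  proof
    fix y assume "y \<in> parts (G \<union> H)"
    then show "y \<in> parts G \<union> parts H"
      by (induction y rule: parts.induct) (auto intro: parts.intros)
  qed
  show "parts G \<union> parts H \<subseteq> parts (G \<union> H)"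
    by (simp add: parts_mono)
qed

lemma parts_insert: "parts (insert x H) = parts {x} \<union> parts H"
  using parts_Un[of "{x}" H] by simp

lemma parts_empty [simp]: "parts {} = {}"
proof -
  have False if "y \<in> parts {}" for y
    using that by (induction y rule: parts.induct) auto
  then show ?thesis by blast
qed

lemma parts_singleton_MData [simp]: "parts {MData ts v} = {MData ts v}"
proof -
  have "y = MData ts v" if "y \<in> parts {MData ts v}" for y
    using that by (induction y rule: parts.induct) auto
  then show ?thesis by (auto intro: parts.inj)
qed

lemma parts_singleton_MReady [simp]: "parts {MReady x} = insert (MReady x) (parts {x})"
proof -
  have "y = MReady x \<or> y \<in> parts {x}" if "y \<in> parts {MReady x}" for y
    using that by (induction y rule: parts.induct) (auto intro: parts.intros)
  moreover have "{x} \<subseteq> parts {MReady x}"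
    by (auto intro: parts.intros)
  ultimately show ?thesis by (auto intro: parts.inj parts_trans)
qed

lemma parts_singleton_MSig [simp]: "parts {MSig p x} = insert (MSig p x) (parts {x})"
proof -
  have "y = MSig p x \<or> y \<in> parts {x}" if "y \<in> parts {MSig p x}" for y
    using that by (induction y rule: parts.induct) (auto intro: parts.intros)
  moreover have "{x} \<subseteq> parts {MSig p x}"
    by (auto intro: parts.intros)
  ultimately show ?thesis by (auto intro: parts.inj parts_trans)
qed

lemma parts_singleton_MDeliv [simp]:
  "parts {MDeliv x \<sigma>} = insert (MDeliv x \<sigma>) (parts {x} \<union> (\<Union>y \<in> fset \<sigma>. parts {y}))"
proof -
  have "y = MDeliv x \<sigma> \<or> y \<in> parts {x} \<or> (\<exists>z. z |\<in>| \<sigma> \<and> y \<in> parts {z})"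
    if "y \<in> parts {MDeliv x \<sigma>}" for y
    using that by (induction y rule: parts.induct) (auto intro: parts.intros)
  moreover have "insert x (fset \<sigma>) \<subseteq> parts {MDeliv x \<sigma>}"
    by (auto intro: parts.intros)
  ultimately show ?thesis by (auto intro: parts.inj parts_trans)
qed

lemma cert_has_correct_signer:
  assumes "is_cert n f m \<sigma>" and "finite B" and "card B \<le> f"
  obtains k where "k \<in> {1..n} - B" and "MSig k (MReady m) |\<in>| \<sigma>"
proof -
  obtain S where S: "fset S \<subseteq> {1..n}" "f + 1 \<le> fcard S" "\<sigma> = (\<lambda>l. MSig l (MReady m)) |`| S"
    using assms(1) unfolding is_cert_def by blast
  have "\<not> fset S \<subseteq> B"
  proof
    assume "fset S \<subseteq> B"
    then have "fcard S \<le> card B"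
      using assms(2) by (simp add: fcard.rep_eq card_mono)
    with S(2) assms(3) show False by simp
  qed
  then obtain k where "k |\<in>| S" "k \<notin> B" by auto
  with S show ?thesis by (intro that[of k]) auto
qed

definition echoed :: "('t,'v) gstate \<Rightarrow> nat \<Rightarrow> nat \<Rightarrow> 't \<Rightarrow> 'v \<Rightarrow> bool" where
  "echoed s p j ts v \<longleftrightarrow> MSig p (MSig j (MData ts v)) \<in> echoR s p"

definition readied :: "('t,'v) gstate \<Rightarrow> nat \<Rightarrow> nat \<Rightarrow> 't \<Rightarrow> 'v \<Rightarrow> bool" where
  "readied s p j ts v \<longleftrightarrow> MSig p (MReady (MSig j (MData ts v))) \<in> readyR s p"

definition ready_committed :: "('t,'v) gstate \<Rightarrow> nat \<Rightarrow> nat \<Rightarrow> 't \<Rightarrow> 'v \<Rightarrow> nat \<Rightarrow> bool" where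
  "ready_committed s p j ts v q \<longleftrightarrow> readied s p j ts v \<or> lpc (locS s p) = RWrReady j ts v
     \<or> (\<exists>k. lpc (locS s p) = RChk1 j ts v k False \<and> q < k)"

fun echo_being_checked :: "('t,'v) pcv \<Rightarrow> (nat \<times> 't \<times> 'v) option" where
  "echo_being_checked (RChk1 j ts v k c) = Some (j, ts, v)"
| "echo_being_checked (RWrReady j ts v) = Some (j, ts, v)"
| "echo_being_checked _ = None"

fun collected_readies :: "('t,'v) pcv \<Rightarrow> (nat \<times> 't \<times> 'v \<times> nat fset) option" where
  "collected_readies (RRdReady j ts v l S) = Some (j, ts, v, S)"
| "collected_readies (RChk2 j ts v S k c) = Some (j, ts, v, S)"
| "collected_readies (RWrDeliv j ts v S) = Some (j, ts, v, S)"
| "collected_readies _ = None"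

definition delivered_recorded :: "('t,'v) gstate \<Rightarrow> bool" where
  "delivered_recorded s \<longleftrightarrow> (\<forall>k. delivR s k \<subseteq> histS s)"

definition pending_delivery_recorded :: "nat set \<Rightarrow> ('t,'v) gstate \<Rightarrow> bool" where
  "pending_delivery_recorded B s \<longleftrightarrow> (\<forall>i e. i \<notin> B \<longrightarrow> lpc (locS s i) = DWr e \<longrightarrow> e \<in> histS s)"

definition ready_sigs_authentic :: "nat set \<Rightarrow> ('t,'v) gstate \<Rightarrow> bool" where
  "ready_sigs_authentic B s \<longleftrightarrow>
     (\<forall>k y. k \<notin> B \<longrightarrow> MSig k (MReady y) \<in> parts (histS s) \<longrightarrow> MSig k (MReady y) \<in> readyR s k)"

definition collected_readies_sound :: "nat set \<Rightarrow> ('t,'v) gstate \<Rightarrow> bool" where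
  "collected_readies_sound B s \<longleftrightarrow> (\<forall>i j ts v S x. i \<notin> B \<longrightarrow>
     collected_readies (lpc (locS s i)) = Some (j, ts, v, S) \<longrightarrow> x |\<in>| S \<longrightarrow> x \<notin> B \<longrightarrow>
     readied s x j ts v)"

definition echo_before_ready :: "nat set \<Rightarrow> ('t,'v) gstate \<Rightarrow> bool" where
  "echo_before_ready B s \<longleftrightarrow> (\<forall>i j ts v. i \<notin> B \<longrightarrow>
     (echo_being_checked (lpc (locS s i)) = Some (j, ts, v) \<or> readied s i j ts v) \<longrightarrow>
     echoed s i j ts v)"

definition no_conflicting_commitments :: "nat \<Rightarrow> nat set \<Rightarrow> ('t,'v) gstate \<Rightarrow> bool" where
  "no_conflicting_commitments n B s \<longleftrightarrow> (\<forall>p q j ts v w. p \<in> {1..n} - B \<longrightarrow> q \<in> {1..n} - B \<longrightarrow>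
     ready_committed s p j ts v q \<longrightarrow> ready_committed s q j ts w p \<longrightarrow> v = w)"

definition rb_invariant :: "nat \<Rightarrow> nat set \<Rightarrow> ('t,'v) gstate \<Rightarrow> bool" where
  "rb_invariant n B s \<longleftrightarrow> delivered_recorded s \<and> pending_delivery_recorded B s
     \<and> ready_sigs_authentic B s \<and> collected_readies_sound B s \<and> echo_before_ready B s
     \<and> no_conflicting_commitments n B s"

lemma rb_invariant_init: "init_state s \<Longrightarrow> rb_invariant n B s"
  by (auto simp: rb_invariant_def delivered_recorded_def pending_delivery_recorded_def
      ready_sigs_authentic_def collected_readies_sound_def echo_before_ready_def
      no_conflicting_commitments_def init_state_def readied_def ready_committed_def)

lemma bstep_effect:
  assumes "bstep B b s s'"
  obtains X where "forge_free B s X" "histS s' = histS s \<union> X" "locS s' = locS s"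
    "\<And>k. k \<noteq> b \<Longrightarrow> echoR s' k = echoR s k \<and> readyR s' k = readyR s k"
    "\<And>k. delivR s' k \<subseteq> delivR s k \<union> X"
  using assms by cases auto

lemma rb_invariant_bstep:
  assumes "bstep B b s s'" and "b \<in> B" and "rb_invariant n B s"
  shows "rb_invariant n B s'"
proof -
  obtain X where forge_free: "forge_free B s X" and hist: "histS s' = histS s \<union> X"
    and loc: "locS s' = locS s"
    and regs: "\<And>k. k \<notin> B \<Longrightarrow> echoR s' k = echoR s k \<and> readyR s' k = readyR s k"
    and deliv: "\<And>k. delivR s' k \<subseteq> delivR s k \<union> X"
    using bstep_effect[OF assms(1)] assms(2) by metis
  have readied: "readied s' x j ts v = readied s x j ts v" if "x \<notin> B" for x j ts v
    using regs[OF that] by (simp add: readied_def)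
  have echoed: "echoed s' x j ts v = echoed s x j ts v" if "x \<notin> B" for x j ts v
    using regs[OF that] by (simp add: echoed_def)
  have committed: "ready_committed s' x j ts v q = ready_committed s x j ts v q"
    if "x \<notin> B" for x j ts v q
    using readied[OF that] loc by (simp add: ready_committed_def)
  have "ready_sigs_authentic B s'"
    using assms(3) forge_free regs
    by (auto simp: rb_invariant_def ready_sigs_authentic_def forge_free_def hist parts_Un)
  moreover have "delivered_recorded s'"
    using assms(3) deliv by (fastforce simp: rb_invariant_def delivered_recorded_def hist)
  ultimately show ?thesis
    using assms(3) readied echoed committed
    by (auto simp: rb_invariant_def pending_delivery_recorded_def collected_readies_sound_def
        echo_before_ready_def no_conflicting_commitments_def loc hist)
qed

lemma delivered_recorded_cstep:
  "cstep n f i s s' \<Longrightarrow> rb_invariant n B s \<Longrightarrow> i \<notin> B \<Longrightarrow> delivered_recorded s'"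
  by (induction rule: cstep.induct)
    (auto simp: rb_invariant_def delivered_recorded_def pending_delivery_recorded_def setloc_def)

lemma pending_delivery_recorded_cstep:
  "cstep n f i s s' \<Longrightarrow> rb_invariant n B s \<Longrightarrow> pending_delivery_recorded B s'"
  by (induction rule: cstep.induct)
    (auto simp: rb_invariant_def delivered_recorded_def pending_delivery_recorded_def setloc_def)

lemma collected_readies_sound_cstep:
  "cstep n f i s s' \<Longrightarrow> rb_invariant n B s \<Longrightarrow> i \<notin> B \<Longrightarrow> collected_readies_sound B s'"
  by (induction rule: cstep.induct)
    (auto simp: rb_invariant_def collected_readies_sound_def readied_def setloc_def)

lemma echo_before_ready_cstep:
  "cstep n f i s s' \<Longrightarrow> rb_invariant n B s \<Longrightarrow> i \<notin> B \<Longrightarrow> echo_before_ready B s'"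
  by (induction rule: cstep.induct)
    (auto simp: rb_invariant_def echo_before_ready_def readied_def echoed_def setloc_def)

lemma ready_sigs_authentic_cstep:
  "cstep n f i s s' \<Longrightarrow> rb_invariant n B s \<Longrightarrow> i \<notin> B \<Longrightarrow> ready_sigs_authentic B s'"
proof (induction rule: cstep.induct)
  case (wr_deliv s i j ts v S e)
  then show ?case
    by (auto simp: rb_invariant_def ready_sigs_authentic_def collected_readies_sound_def
        readied_def setloc_def parts_insert[of _ "histS s"])
next
  case (dwr s i e)
  then have "e \<in> histS s"
    by (auto simp: rb_invariant_def pending_delivery_recorded_def)
  with dwr show ?case
    by (simp add: rb_invariant_def ready_sigs_authentic_def setloc_def insert_absorb)
qed (auto simp: rb_invariant_def ready_sigs_authentic_def setloc_def parts_insert[of _ "histS _"])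

lemma ready_committed_cstep:
  assumes "cstep n f i s s'" and "ready_committed s' p j ts v q" and "q \<in> {1..n}"
  shows "ready_committed s p j ts v q
    \<or> (p = i \<and> lpc (locS s i) = RChk1 j ts v q False \<and> \<not> conflict_in (echoR s q) q j ts v)"
  using assms
proof (induction rule: cstep.induct)
  case (chk1_rd s i j' ts' v' k c)
  then show ?case
    by (auto simp: ready_committed_def readied_def setloc_def less_Suc_eq split: if_splits)
qed (auto simp: ready_committed_def readied_def setloc_def split: if_splits)

lemma ready_committed_echoed:
  "echo_before_ready B s \<Longrightarrow> p \<notin> B \<Longrightarrow> ready_committed s p j ts v q \<Longrightarrow> echoed s p j ts v"
  unfolding echo_before_ready_def ready_committed_def by force

lemma no_conflicting_commitments_cstep:
  assumes step: "cstep n f i s s'" and inv: "rb_invariant n B s"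
  shows "no_conflicting_commitments n B s'"
  unfolding no_conflicting_commitments_def
proof (intro allI impI)
  fix p q j ts v w
  assume p: "p \<in> {1..n} - B" and q: "q \<in> {1..n} - B"
    and pv: "ready_committed s' p j ts v q" and qw: "ready_committed s' q j ts w p"
  have echo: "echo_before_ready B s" and old: "no_conflicting_commitments n B s"
    using inv by (auto simp: rb_invariant_def)
  have late_commit_agrees: "u = u'"
    if "ready_committed s x j ts u y" "x \<in> {1..n} - B"
      "lpc (locS s i) = RChk1 j ts u' x False" "\<not> conflict_in (echoR s x) x j ts u'"
    for x y u u'
    using ready_committed_echoed[OF echo _ that(1)] that(2-4)
    by (auto simp: conflict_in_def echoed_def)
  from ready_committed_cstep[OF step pv] ready_committed_cstep[OF step qw] p q
  consider "ready_committed s p j ts v q" "ready_committed s q j ts w p"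
    | "ready_committed s p j ts v q" "lpc (locS s i) = RChk1 j ts w p False"
        "\<not> conflict_in (echoR s p) p j ts w"
    | "ready_committed s q j ts w p" "lpc (locS s i) = RChk1 j ts v q False"
        "\<not> conflict_in (echoR s q) q j ts v"
    | "lpc (locS s i) = RChk1 j ts v q False" "lpc (locS s i) = RChk1 j ts w p False"
    by auto
  then show "v = w"
  proof cases
    case 1
    with old p q show ?thesis by (auto simp: no_conflicting_commitments_def)
  next
    case 2
    with late_commit_agrees p show ?thesis by blast
  next
    case 3
    with late_commit_agrees q show ?thesis by blast
  qed simp
qed

lemma rb_invariant_reach:
  assumes "reach n f B s"
  shows "rb_invariant n B s"
  using assms
proof (induction rule: reach.induct)
  case (init s)
  then show ?case by (rule rb_invariant_init)
next
  case (stp s s')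
  then consider i where "i \<notin> B" "cstep n f i s s'" | b where "b \<in> B" "bstep B b s s'"
    by (auto simp: step_def)
  then show ?case
  proof cases
    case 1
    with stp.IH show ?thesis
      unfolding rb_invariant_def[of n B s']
      by (simp add: delivered_recorded_cstep pending_delivery_recorded_cstep
          ready_sigs_authentic_cstep collected_readies_sound_cstep echo_before_ready_cstep
          no_conflicting_commitments_cstep)
  next
    case 2
    with stp.IH show ?thesis by (blast intro: rb_invariant_bstep)
  qed
qed

lemma delivered_has_correct_ready:
  assumes "reach n f B s" and "finite B" and "card B \<le> f"
    and "is_cert n f m \<sigma>" and "MDeliv m \<sigma> \<in> delivR s j"
  shows "\<exists>k \<in> {1..n} - B. MSig k (MReady m) \<in> readyR s k"
proof -
  have inv: "rb_invariant n B s"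
    using assms(1) by (rule rb_invariant_reach)
  obtain k where k: "k \<in> {1..n} - B" and sig: "MSig k (MReady m) |\<in>| \<sigma>"
    using cert_has_correct_signer[OF assms(4,2,3)] .
  have "MDeliv m \<sigma> \<in> parts (histS s)"
    using inv assms(5) by (auto simp: rb_invariant_def delivered_recorded_def intro: parts.inj)
  then have "MSig k (MReady m) \<in> parts (histS s)"
    using sig by (rule parts.dl2)
  with inv k have "MSig k (MReady m) \<in> readyR s k"
    by (auto simp: rb_invariant_def ready_sigs_authentic_def)
  with k show ?thesis ..
qed

lemma ready_implies_echo:
  assumes "reach n f B s" and "j \<notin> B" and "MSig j (MReady (MSig i (MData ts v))) \<in> readyR s j"
  shows "MSig j (MSig i (MData ts v)) \<in> echoR s j"
  using rb_invariant_reach[OF assms(1)] assms(2,3)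
  by (auto simp: rb_invariant_def echo_before_ready_def readied_def echoed_def)

lemma correct_readies_agree:
  assumes "reach n f B s" and "j \<in> {1..n} - B" and "j' \<in> {1..n} - B"
    and "MSig j (MReady (MSig i (MData ts v))) \<in> readyR s j"
    and "MSig j' (MReady (MSig i (MData ts w))) \<in> readyR s j'"
  shows "v = w"
  using rb_invariant_reach[OF assms(1)] assms(2-)
  by (auto simp: rb_invariant_def no_conflicting_commitments_def ready_committed_def readied_def)

lemma correct_deliveries_agree:
  assumes "reach n f B s" and "finite B" and "card B \<le> f"
    and "is_cert n f (MSig i (MData ts v)) \<sigma>" and "MDeliv (MSig i (MData ts v)) \<sigma> \<in> delivR s j"
    and "is_cert n f (MSig i (MData ts w)) \<sigma>'" and "MDeliv (MSig i (MData ts w)) \<sigma>' \<in> delivR s j'"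
  shows "v = w"
  using delivered_has_correct_ready[OF assms(1-5)] delivered_has_correct_ready[OF assms(1-3,6,7)]
    correct_readies_agree[OF assms(1)] by blast

theorem lemma6p3:
  fixes n f :: nat and B :: "nat set" and s :: "('t,'v) gstate"
  assumes "B \<subseteq> {1..n}" and "card B \<le> f" and "reach n f B s"
  shows
   "(\<forall>i j ts v \<sigma>. i \<in> {1..n} \<longrightarrow> j \<in> {1..n} \<longrightarrow>
        is_cert n f (MSig i (MData ts v)) \<sigma> \<longrightarrow>
        MDeliv (MSig i (MData ts v)) \<sigma> \<in> delivR s j \<longrightarrow>
        (\<exists>k \<in> {1..n} - B. MSig k (MReady (MSig i (MData ts v))) \<in> readyR s k))
  \<and> (\<forall>i j ts v. i \<in> {1..n} \<longrightarrow> j \<in> {1..n} - B \<longrightarrow>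
        MSig j (MReady (MSig i (MData ts v))) \<in> readyR s j \<longrightarrow>
        MSig j (MSig i (MData ts v)) \<in> echoR s j)
  \<and> (\<forall>i j j' ts v w. i \<in> {1..n} \<longrightarrow> j \<in> {1..n} - B \<longrightarrow> j' \<in> {1..n} - B \<longrightarrow>
        MSig j (MReady (MSig i (MData ts v))) \<in> readyR s j \<longrightarrow>
        MSig j' (MReady (MSig i (MData ts w))) \<in> readyR s j' \<longrightarrow> v = w)
  \<and> (\<forall>i j j' ts v w \<sigma> \<sigma>'. i \<in> {1..n} \<longrightarrow> j \<in> {1..n} - B \<longrightarrow> j' \<in> {1..n} - B \<longrightarrow>
        is_cert n f (MSig i (MData ts v)) \<sigma> \<longrightarrow> is_cert n f (MSig i (MData ts w)) \<sigma>' \<longrightarrow>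
        MDeliv (MSig i (MData ts v)) \<sigma> \<in> delivR s j \<longrightarrow>
        MDeliv (MSig i (MData ts w)) \<sigma>' \<in> delivR s j' \<longrightarrow> v = w)"
proof -
  have "finite B"
    using assms(1) by (rule finite_subset) simp
  with assms(2,3) show ?thesis
    by (blast intro: delivered_has_correct_ready ready_implies_echo correct_readies_agree
        correct_deliveries_agree)
qed

end
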